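(* Let $C\subseteq\mathbb F_2^n$ be a classical linear code with parity check matrix $H$, let $\Gamma\subseteq2^{[n]}$, and let $\hat\Gamma=\{e\neq\emptyset: e\subseteq\gamma \text{ for some }\gamma\in\Gamma\}$. Then $\gamma_1\cup\gamma_2\in\Delta^{D}$ for all $\gamma_1,\gamma_2\in\Gamma$ if and only if $\mathrm{syn}(e_1)\neq0$ for all $e_1\in\hat\Gamma$ and $\mathrm{syn}(e_1+e_2)\neq0$ for all distinct $e_1,e_2\in\hat\Gamma$.
   Context: Vectors in $\mathbb F_2^n$ are identified with their support sets (so $e_1+e_2$ corresponds to symmetric difference). The syndrome is $\mathrm{syn}(e)=He$. $\Delta^{D}=\{\gamma\subseteq[n]: \mathrm{syn}(e)\neq0 \text{ for all nonzero } e \text{ with } \mathrm{supp}(e)\subseteq\gamma\}$. *)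

theory Defs
  imports Main "HOL-Library.Z2"
begin

text \<open>Vectors of F_2^n are identified with their support sets, subsets of {0..<n}.\<close>

definition syn :: "nat \<Rightarrow> (nat \<Rightarrow> nat \<Rightarrow> bit) \<Rightarrow> nat set \<Rightarrow> (nat \<Rightarrow> bit)" where
  "syn m H e = (\<lambda>i. if i < m then (\<Sum>j\<in>e. H i j) else 0)"

definition DeltaD :: "nat \<Rightarrow> nat \<Rightarrow> (nat \<Rightarrow> nat \<Rightarrow> bit) \<Rightarrow> nat set set" where
  "DeltaD n m H = {\<gamma>. \<gamma> \<subseteq> {0..<n} \<and>
      (\<forall>e. e \<noteq> {} \<and> e \<subseteq> \<gamma> \<longrightarrow> syn m H e \<noteq> (\<lambda>_. 0))}"

definition Gamma_hat :: "nat set set \<Rightarrow> nat set set" where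
  "Gamma_hat \<Gamma> = {e. e \<noteq> {} \<and> (\<exists>\<gamma>\<in>\<Gamma>. e \<subseteq> \<gamma>)}"

end

theory Submission
  imports Defs
begin

text \<open>A nonempty e inside \<open>\<gamma>1 \<union> \<gamma>2\<close> either lies in \<open>Gamma_hat \<Gamma>\<close> already or is the
  symmetric difference of its two nonempty, hence distinct, disjoint pieces
  \<open>e \<inter> \<gamma>1\<close> and \<open>e - \<gamma>1\<close>; conversely the symmetric difference of two distinct members of
  \<open>Gamma_hat \<Gamma>\<close> is a nonempty subset of the union of two members of \<open>\<Gamma>\<close>.\<close>

lemma Gamma_hatI: "e \<noteq> {} \<Longrightarrow> e \<subseteq> \<gamma> \<Longrightarrow> \<gamma> \<in> \<Gamma> \<Longrightarrow> e \<in> Gamma_hat \<Gamma>"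
  unfolding Gamma_hat_def by blast

lemma Gamma_hatE:
  assumes "e \<in> Gamma_hat \<Gamma>"
  obtains \<gamma> where "\<gamma> \<in> \<Gamma>" "e \<subseteq> \<gamma>" "e \<noteq> {}"
  using assms unfolding Gamma_hat_def by blast

lemma subset_union_in_Gamma_hat_or_sym_diff:
  assumes "\<gamma>1 \<in> \<Gamma>" "\<gamma>2 \<in> \<Gamma>" "e \<noteq> {}" "e \<subseteq> \<gamma>1 \<union> \<gamma>2"
  shows "e \<in> Gamma_hat \<Gamma> \<or> (\<exists>a\<in>Gamma_hat \<Gamma>. \<exists>b\<in>Gamma_hat \<Gamma>. a \<noteq> b \<and> sym_diff a b = e)"
proof (cases "e \<inter> \<gamma>1 = {} \<or> e - \<gamma>1 = {}")
  case True
  with assms have "e \<in> Gamma_hat \<Gamma>" by (blast intro: Gamma_hatI)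
  then show ?thesis ..
next
  case False
  with assms have "e \<inter> \<gamma>1 \<in> Gamma_hat \<Gamma>" "e - \<gamma>1 \<in> Gamma_hat \<Gamma>"
    by (blast intro: Gamma_hatI)+
  moreover have "e \<inter> \<gamma>1 \<noteq> e - \<gamma>1" "sym_diff (e \<inter> \<gamma>1) (e - \<gamma>1) = e"
    using False by blast+
  ultimately show ?thesis by blast
qed

lemma union_subsets_iff_Gamma_hat:
  fixes P :: "nat set \<Rightarrow> bool"
  shows "(\<forall>\<gamma>1\<in>\<Gamma>. \<forall>\<gamma>2\<in>\<Gamma>. \<forall>e. e \<noteq> {} \<and> e \<subseteq> \<gamma>1 \<union> \<gamma>2 \<longrightarrow> P e) \<longleftrightarrow>
    (\<forall>e\<in>Gamma_hat \<Gamma>. P e) \<and>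
    (\<forall>e1\<in>Gamma_hat \<Gamma>. \<forall>e2\<in>Gamma_hat \<Gamma>. e1 \<noteq> e2 \<longrightarrow> P (sym_diff e1 e2))"
  (is "?unions \<longleftrightarrow> ?singles \<and> ?pairs")
proof
  assume ?unions
  then have unions: "P e" if "\<gamma>1 \<in> \<Gamma>" "\<gamma>2 \<in> \<Gamma>" "e \<noteq> {}" "e \<subseteq> \<gamma>1 \<union> \<gamma>2" for \<gamma>1 \<gamma>2 e
    using that by blast
  have ?singles
  proof
    fix e assume "e \<in> Gamma_hat \<Gamma>"
    then obtain \<gamma> where "\<gamma> \<in> \<Gamma>" "e \<subseteq> \<gamma>" "e \<noteq> {}" by (rule Gamma_hatE)
    then show "P e" by (blast intro: unions)
  qed
  moreover have ?pairs
  proof (intro ballI impI)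
    fix e1 e2 assume "e1 \<in> Gamma_hat \<Gamma>" "e2 \<in> Gamma_hat \<Gamma>" "e1 \<noteq> e2"
    obtain \<gamma>1 where "\<gamma>1 \<in> \<Gamma>" "e1 \<subseteq> \<gamma>1" using \<open>e1 \<in> Gamma_hat \<Gamma>\<close> by (rule Gamma_hatE)
    obtain \<gamma>2 where "\<gamma>2 \<in> \<Gamma>" "e2 \<subseteq> \<gamma>2" using \<open>e2 \<in> Gamma_hat \<Gamma>\<close> by (rule Gamma_hatE)
    have "sym_diff e1 e2 \<subseteq> \<gamma>1 \<union> \<gamma>2" using \<open>e1 \<subseteq> \<gamma>1\<close> \<open>e2 \<subseteq> \<gamma>2\<close> by blast
    moreover have "sym_diff e1 e2 \<noteq> {}" using \<open>e1 \<noteq> e2\<close> by auto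
    ultimately show "P (sym_diff e1 e2)" using \<open>\<gamma>1 \<in> \<Gamma>\<close> \<open>\<gamma>2 \<in> \<Gamma>\<close> by (blast intro: unions)
  qed
  ultimately show "?singles \<and> ?pairs" ..
next
  assume "?singles \<and> ?pairs"
  then have singles: ?singles and pairs: ?pairs by blast+
  show ?unions
  proof (intro ballI allI impI)
    fix \<gamma>1 \<gamma>2 e
    assume \<gamma>: "\<gamma>1 \<in> \<Gamma>" "\<gamma>2 \<in> \<Gamma>" and e: "e \<noteq> {} \<and> e \<subseteq> \<gamma>1 \<union> \<gamma>2"
    from subset_union_in_Gamma_hat_or_sym_diff[OF \<gamma> e[THEN conjunct1] e[THEN conjunct2]]
    consider "e \<in> Gamma_hat \<Gamma>"
      | a b where "a \<in> Gamma_hat \<Gamma>" "b \<in> Gamma_hat \<Gamma>" "a \<noteq> b" "sym_diff a b = e"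
      by blast
    then show "P e"
    proof cases
      case 1
      with singles show ?thesis by blast
    next
      case (2 a b)
      with pairs have "P (sym_diff a b)" by blast
      with \<open>sym_diff a b = e\<close> show ?thesis by simp
    qed
  qed
qed

theorem lemma12:
  fixes n m :: nat and H :: "nat \<Rightarrow> nat \<Rightarrow> bit" and \<Gamma> :: "nat set set"
  assumes "\<Gamma> \<subseteq> Pow {0..<n}"
  shows "(\<forall>\<gamma>1\<in>\<Gamma>. \<forall>\<gamma>2\<in>\<Gamma>. \<gamma>1 \<union> \<gamma>2 \<in> DeltaD n m H) \<longleftrightarrow>
         ((\<forall>e1\<in>Gamma_hat \<Gamma>. syn m H e1 \<noteq> (\<lambda>_. 0)) \<and>
          (\<forall>e1\<in>Gamma_hat \<Gamma>. \<forall>e2\<in>Gamma_hat \<Gamma>. e1 \<noteq> e2 \<longrightarrow>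
              syn m H ((e1 - e2) \<union> (e2 - e1)) \<noteq> (\<lambda>_. 0)))"
proof -
  have "\<gamma>1 \<union> \<gamma>2 \<in> DeltaD n m H \<longleftrightarrow>
      (\<forall>e. e \<noteq> {} \<and> e \<subseteq> \<gamma>1 \<union> \<gamma>2 \<longrightarrow> syn m H e \<noteq> (\<lambda>_. 0))"
    if "\<gamma>1 \<in> \<Gamma>" "\<gamma>2 \<in> \<Gamma>" for \<gamma>1 \<gamma>2
    using that assms unfolding DeltaD_def by blast
  then show ?thesis
    using union_subsets_iff_Gamma_hat[where P = "\<lambda>e. syn m H e \<noteq> (\<lambda>_. 0)"]
    by (simp cong: ball_cong)
qed

end
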